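(* Let $A$ be a set and $f:[-1,1]^A \to \mathbb{R}$ a function that is continuous (for the product topology) and positively homogeneous, and that depends on finitely many coordinates, i.e. there exist a finite subset $A_0 \subset A$ and $\tilde{f}:[-1,1]^{A_0} \to \mathbb{R}$ with $f(x^* ) = \tilde{f}(x^*|_{A_0})$ for all $x^*$. Then $f \in FBL(A)$.
   Context: Positively homogeneous means $f(\lambda x^* )=\lambda f(x^* )$ whenever $\lambda\ge 0$ and $x^*,\lambda x^*\in[-1,1]^A$. For $x\in A$, $\delta_x:[-1,1]^A\to[-1,1]$ is $\delta_x(x^* )=x^*(x)$. For $f:[-1,1]^A\to\mathbb{R}$, $\|f\| = \sup \{\sum_{i = 1}^n | f(x_{i}^{\ast})| : n \in \mathbb{N},\ x_1^{\ast}, \ldots, x_n^{\ast} \in [-1,1]^A,\ \sup_{x \in A} \sum_{i=1}^n |x_i^{\ast}(x)| \leq 1 \}$. $FBL(A)$ is the Banach lattice generated by the functions $\delta_x$ ($x\in A$) inside the Banach lattice of all functions $[-1,1]^A\to\mathbb{R}$ with finite norm (pointwise operations and order). *)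

theory Defs
  imports "HOL-Analysis.Analysis"
begin

text \<open>The cube [-1,1]^A, for A :: 'a set, is represented by functions 'a => real
  with values in [-1,1] on A and value 0 outside A. The topology on 'a => real
  is the product topology (library instance), so the subspace topology on this
  set is the product topology of [-1,1]^A.\<close>
definition cube :: "'a set \<Rightarrow> ('a \<Rightarrow> real) set" where
  "cube A = {x. (\<forall>a\<in>A. -1 \<le> x a \<and> x a \<le> 1) \<and> (\<forall>a. a \<notin> A \<longrightarrow> x a = 0)}"

text \<open>Functions on the cube are represented by functions vanishing outside it.\<close>
definition on_cube :: "'a set \<Rightarrow> (('a \<Rightarrow> real) \<Rightarrow> real) \<Rightarrow> (('a \<Rightarrow> real) \<Rightarrow> real)" where
  "on_cube A f = (\<lambda>x. if x \<in> cube A then f x else 0)"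

definition delta :: "'a set \<Rightarrow> 'a \<Rightarrow> (('a \<Rightarrow> real) \<Rightarrow> real)" where
  "delta A a = on_cube A (\<lambda>x. x a)"

definition fbl_sums :: "'a set \<Rightarrow> (('a \<Rightarrow> real) \<Rightarrow> real) \<Rightarrow> real set" where
  "fbl_sums A f = {(\<Sum>i<n. \<bar>f (xs i)\<bar>) | (n::nat) (xs :: nat \<Rightarrow> 'a \<Rightarrow> real).
      (\<forall>i<n. xs i \<in> cube A) \<and> (\<forall>a\<in>A. (\<Sum>i<n. \<bar>xs i a\<bar>) \<le> 1)}"

definition fbl_norm :: "'a set \<Rightarrow> (('a \<Rightarrow> real) \<Rightarrow> real) \<Rightarrow> real" where
  "fbl_norm A f = Sup (fbl_sums A f)"

text \<open>The ambient Banach lattice: functions on the cube with finite norm.\<close>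
definition fin_norm_space :: "'a set \<Rightarrow> (('a \<Rightarrow> real) \<Rightarrow> real) set" where
  "fin_norm_space A = {f. (\<forall>x. x \<notin> cube A \<longrightarrow> f x = 0) \<and> bdd_above (fbl_sums A f)}"

definition closed_sublattice :: "'a set \<Rightarrow> (('a \<Rightarrow> real) \<Rightarrow> real) set \<Rightarrow> bool" where
  "closed_sublattice A S \<longleftrightarrow>
     S \<subseteq> fin_norm_space A \<and>
     (\<lambda>x. 0) \<in> S \<and>
     (\<forall>f\<in>S. \<forall>g\<in>S. (\<lambda>x. f x + g x) \<in> S) \<and>
     (\<forall>c::real. \<forall>f\<in>S. (\<lambda>x. c * f x) \<in> S) \<and>
     (\<forall>f\<in>S. \<forall>g\<in>S. (\<lambda>x. max (f x) (g x)) \<in> S \<and> (\<lambda>x. min (f x) (g x)) \<in> S) \<and>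
     (\<forall>F g. (\<forall>n. F n \<in> S) \<and> g \<in> fin_norm_space A \<and>
            (\<lambda>n. fbl_norm A (\<lambda>x. F n x - g x)) \<longlonglongrightarrow> 0 \<longrightarrow> g \<in> S)"

definition FBL :: "'a set \<Rightarrow> (('a \<Rightarrow> real) \<Rightarrow> real) set" where
  "FBL A = \<Inter> {S. closed_sublattice A S \<and> (\<forall>a\<in>A. delta A a \<in> S)}"

end

theory Submission
  imports Defs
begin

text \<open>A positively homogeneous function g on the cube that depends only on the coordinates in
  the finite set A0 is controlled by its values on the compact set K of points supported in A0
  with sum over A0 of absolute values equal to 1: if |g| \<le> e on K, then
  |g x| \<le> e * (sum over A0 of |x a|), so every sum in the FBL-norm of g is at most e * card A0.
  On K the lattice generated by the delta_a with a in A0 interpolates arbitrary values at any two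
  points: by Cramer's rule if they are linearly independent, and otherwise they coincide or are
  antipodal, in which case the positive and negative parts of a single delta_a separate them.
  The lattice form of the Stone-Weierstrass theorem thus approximates f uniformly on K inside
  every closed sublattice containing the deltas, and the norm estimate turns this into
  approximation in FBL(A).\<close>

section \<open>The lattice version of the Stone-Weierstrass theorem\<close>

lemma Min_image_closed:
  assumes min: "\<And>g h. g \<in> L \<Longrightarrow> h \<in> L \<Longrightarrow> (\<lambda>z. min (g z) (h z)) \<in> L"
    and "finite Y" "Y \<noteq> {}" "\<And>y. y \<in> Y \<Longrightarrow> H y \<in> L"
  shows "(\<lambda>z. Min ((\<lambda>y. H y z) ` Y)) \<in> L"
  using assms(2-4)
proof (induction Y rule: finite_ne_induct)
  case (singleton y)
  then show ?case by simp
next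
  case (insert y Y)
  then have "(\<lambda>z. Min ((\<lambda>y. H y z) ` insert y Y)) = (\<lambda>z. min (H y z) (Min ((\<lambda>y. H y z) ` Y)))"
    by simp
  then show ?case
    using min insert by simp
qed

lemma Max_image_closed:
  assumes max: "\<And>g h. g \<in> L \<Longrightarrow> h \<in> L \<Longrightarrow> (\<lambda>z. max (g z) (h z)) \<in> L"
    and "finite Y" "Y \<noteq> {}" "\<And>y. y \<in> Y \<Longrightarrow> H y \<in> L"
  shows "(\<lambda>z. Max ((\<lambda>y. H y z) ` Y)) \<in> L"
  using assms(2-4)
proof (induction Y rule: finite_ne_induct)
  case (singleton y)
  then show ?case by simp
next
  case (insert y Y)
  then have "(\<lambda>z. Max ((\<lambda>y. H y z) ` insert y Y)) = (\<lambda>z. max (H y z) (Max ((\<lambda>y. H y z) ` Y)))"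
    by simp
  then show ?case
    using max insert by simp
qed

lemma compact_finite_cover_less:
  fixes K :: "'b::topological_space set" and D :: "'b \<Rightarrow> 'b \<Rightarrow> real"
  assumes K: "compact K" and cont: "\<And>y. y \<in> K \<Longrightarrow> continuous_on K (D y)"
    and diag: "\<And>y. y \<in> K \<Longrightarrow> D y y < e"
  obtains Y where "finite Y" "Y \<subseteq> K" "\<And>z. z \<in> K \<Longrightarrow> \<exists>y\<in>Y. D y z < e"
proof -
  have "\<exists>U. open U \<and> U \<inter> K = D y -` {..<e} \<inter> K" if "y \<in> K" for y
    using cont[OF that] open_lessThan[of e] unfolding continuous_on_open_invariant by blast
  then obtain U where U: "\<And>y. y \<in> K \<Longrightarrow> open (U y) \<and> U y \<inter> K = D y -` {..<e} \<inter> K"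
    by metis
  have "y \<in> U y" if "y \<in> K" for y
    using U[OF that] diag[OF that] that by blast
  then have "K \<subseteq> (\<Union>y\<in>K. U y)"
    by blast
  then obtain Y where Y: "Y \<subseteq> K" "finite Y" "K \<subseteq> (\<Union>y\<in>Y. U y)"
    using compactE_image[OF K, of K U] U by blast
  have "\<exists>y\<in>Y. D y z < e" if z: "z \<in> K" for z
  proof -
    obtain y where "y \<in> Y" "z \<in> U y"
      using Y(3) z by blast
    then show ?thesis
      using U[of y] Y(1) z by blast
  qed
  with Y show ?thesis
    using that by blast
qed

lemma lattice_approx_from_above_at:
  fixes K :: "'b::topological_space set" and f :: "'b \<Rightarrow> real"
  assumes K: "compact K" and f: "continuous_on K f"
    and L_cont: "\<And>h. h \<in> L \<Longrightarrow> continuous_on K h"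
    and L_min: "\<And>g h. g \<in> L \<Longrightarrow> h \<in> L \<Longrightarrow> (\<lambda>z. min (g z) (h z)) \<in> L"
    and interp: "\<And>x y. x \<in> K \<Longrightarrow> y \<in> K \<Longrightarrow> \<exists>h\<in>L. h x = f x \<and> h y = f y"
    and e: "e > 0" and x: "x \<in> K"
  shows "\<exists>g\<in>L. g x = f x \<and> (\<forall>z\<in>K. g z < f z + e)"
proof -
  obtain H where H: "\<And>y. y \<in> K \<Longrightarrow> H y \<in> L \<and> H y x = f x \<and> H y y = f y"
    using interp[OF x] by metis
  obtain Y where Y: "finite Y" "Y \<subseteq> K" and cover: "\<And>z. z \<in> K \<Longrightarrow> \<exists>y\<in>Y. H y z - f z < e"
    by (rule compact_finite_cover_less[OF K, of "\<lambda>y z. H y z - f z"])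
       (use H L_cont f e in \<open>auto intro: continuous_on_diff\<close>)
  have "Y \<noteq> {}"
    using cover x by blast
  define g where "g z = Min ((\<lambda>y. H y z) ` Y)" for z
  have "g \<in> L"
    unfolding g_def using Min_image_closed[OF L_min Y(1) \<open>Y \<noteq> {}\<close>] H Y(2) by blast
  moreover have "g x = f x"
  proof -
    have "(\<lambda>y. H y x) ` Y = {f x}"
      using H Y(2) \<open>Y \<noteq> {}\<close> by (force simp: image_iff)
    then show ?thesis by (simp add: g_def)
  qed
  moreover have "g z < f z + e" if z: "z \<in> K" for z
  proof -
    obtain y where "y \<in> Y" "H y z - f z < e"
      using cover[OF z] by blast
    moreover have "g z \<le> H y z"
      using \<open>y \<in> Y\<close> Y(1) by (simp add: g_def)
    ultimately show ?thesis by linarith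
  qed
  ultimately show ?thesis by blast
qed

theorem lattice_Stone_Weierstrass:
  fixes K :: "'b::topological_space set" and f :: "'b \<Rightarrow> real"
  assumes K: "compact K" and f: "continuous_on K f"
    and L_cont: "\<And>h. h \<in> L \<Longrightarrow> continuous_on K h"
    and L_min: "\<And>g h. g \<in> L \<Longrightarrow> h \<in> L \<Longrightarrow> (\<lambda>z. min (g z) (h z)) \<in> L"
    and L_max: "\<And>g h. g \<in> L \<Longrightarrow> h \<in> L \<Longrightarrow> (\<lambda>z. max (g z) (h z)) \<in> L"
    and interp: "\<And>x y. x \<in> K \<Longrightarrow> y \<in> K \<Longrightarrow> \<exists>h\<in>L. h x = f x \<and> h y = f y"
    and "L \<noteq> {}" and e: "e > 0"
  shows "\<exists>h\<in>L. \<forall>z\<in>K. \<bar>h z - f z\<bar> < e"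
proof (cases "K = {}")
  case True
  then show ?thesis using \<open>L \<noteq> {}\<close> by blast
next
  case False
  obtain G where G: "\<And>x. x \<in> K \<Longrightarrow> G x \<in> L \<and> G x x = f x \<and> (\<forall>z\<in>K. G x z < f z + e)"
    using lattice_approx_from_above_at[OF K f L_cont L_min interp e] by metis
  obtain Y where Y: "finite Y" "Y \<subseteq> K" and cover: "\<And>z. z \<in> K \<Longrightarrow> \<exists>y\<in>Y. f z - G y z < e"
    by (rule compact_finite_cover_less[OF K, of "\<lambda>y z. f z - G y z"])
       (use G L_cont f e in \<open>auto intro: continuous_on_diff\<close>)
  have "Y \<noteq> {}"
    using cover False by blast
  define h where "h z = Max ((\<lambda>y. G y z) ` Y)" for z
  have "h \<in> L"
    unfolding h_def using Max_image_closed[OF L_max Y(1) \<open>Y \<noteq> {}\<close>] G Y(2) by blast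
  moreover have "\<bar>h z - f z\<bar> < e" if z: "z \<in> K" for z
  proof -
    obtain y where "y \<in> Y" "f z - G y z < e"
      using cover[OF z] by blast
    moreover have "G y z \<le> h z"
      using \<open>y \<in> Y\<close> Y(1) by (simp add: h_def)
    moreover have "h z < f z + e"
      unfolding h_def using G Y \<open>Y \<noteq> {}\<close> z by (subst Max_less_iff) auto
    ultimately show ?thesis by linarith
  qed
  ultimately show ?thesis by blast
qed

section \<open>Homogeneous functions of finitely many coordinates\<close>

definition restr0 :: "'a set \<Rightarrow> ('a \<Rightarrow> real) \<Rightarrow> 'a \<Rightarrow> real" where
  "restr0 A0 x = (\<lambda>a. if a \<in> A0 then x a else 0)"

definition l1_norm :: "'a set \<Rightarrow> ('a \<Rightarrow> real) \<Rightarrow> real" where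
  "l1_norm A0 x = (\<Sum>a\<in>A0. \<bar>x a\<bar>)"

definition l1_sphere :: "'a set \<Rightarrow> 'a set \<Rightarrow> ('a \<Rightarrow> real) set" where
  "l1_sphere A A0 = {y \<in> cube A. restr0 A0 y = y \<and> l1_norm A0 y = 1}"

definition pos_homogeneous_on :: "'a set \<Rightarrow> (('a \<Rightarrow> real) \<Rightarrow> real) \<Rightarrow> bool" where
  "pos_homogeneous_on A g \<longleftrightarrow>
     (\<forall>c x. c \<ge> 0 \<longrightarrow> x \<in> cube A \<longrightarrow> (\<lambda>a. c * x a) \<in> cube A \<longrightarrow> g (\<lambda>a. c * x a) = c * g x)"

definition depends_only_on :: "'a set \<Rightarrow> 'a set \<Rightarrow> (('a \<Rightarrow> real) \<Rightarrow> real) \<Rightarrow> bool" where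
  "depends_only_on A A0 g \<longleftrightarrow> (\<forall>x\<in>cube A. g (restr0 A0 x) = g x)"

lemma restr0_in_cube: "A0 \<subseteq> A \<Longrightarrow> x \<in> cube A \<Longrightarrow> restr0 A0 x \<in> cube A"
  by (auto simp: restr0_def cube_def)

lemma restr0_idem [simp]: "restr0 A0 (restr0 A0 x) = restr0 A0 x"
  by (simp add: restr0_def fun_eq_iff)

lemma l1_sphere_subset_cube: "l1_sphere A A0 \<subseteq> cube A"
  by (auto simp: l1_sphere_def)

lemma compact_l1_sphere: "compact (l1_sphere A A0)"
proof -
  define I where "I a = (if a \<in> A0 \<inter> A then {-1..1} else {0::real})" for a
  have "l1_sphere A A0 = PiE UNIV I \<inter> {y. l1_norm A0 y = 1}"
    unfolding l1_sphere_def cube_def restr0_def I_def PiE_UNIV_domain Pi_def fun_eq_iff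
    by (auto split: if_splits) (smt (verit))+
  moreover have "compact (PiE UNIV I)"
    using compactin_PiE[of "\<lambda>_. euclidean" UNIV I]
    by (simp add: euclidean_product_topology I_def)
  moreover have "closed {y. l1_norm A0 y = 1}"
    unfolding l1_norm_def
    by (intro closed_Collect_eq continuous_intros continuous_on_product_coordinates)
  ultimately show ?thesis
    by (simp add: compact_Int_closed)
qed

lemma l1_sphere_normalize:
  assumes "finite A0" "A0 \<subseteq> A" "x \<in> cube A" "l1_norm A0 x \<noteq> 0"
  obtains y where "y \<in> l1_sphere A A0" "restr0 A0 x = (\<lambda>a. l1_norm A0 x * y a)"
proof
  define s where "s = l1_norm A0 x"
  have "s > 0"
    using assms(4) by (simp add: s_def l1_norm_def order_le_neq_trans sum_nonneg)
  define y where "y a = restr0 A0 x a / s" for a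
  have "\<bar>restr0 A0 x a\<bar> \<le> s" for a
    using member_le_sum[of a A0 "\<lambda>a. \<bar>x a\<bar>"] assms(1) \<open>s > 0\<close>
    by (auto simp: s_def l1_norm_def restr0_def)
  then have "\<bar>y a\<bar> \<le> 1" for a
    using \<open>s > 0\<close> by (simp add: y_def abs_divide)
  then have "-1 \<le> y a \<and> y a \<le> 1" for a
    by (simp add: abs_le_iff)
  moreover have "y a = 0" if "a \<notin> A0" for a
    using that by (simp add: y_def restr0_def)
  moreover have "l1_norm A0 y = 1"
    using \<open>s > 0\<close>
    by (simp add: y_def l1_norm_def abs_divide sum_divide_distrib[symmetric])
       (simp add: s_def l1_norm_def restr0_def)
  ultimately show "y \<in> l1_sphere A A0"
    using assms(2) by (auto simp: l1_sphere_def cube_def restr0_def fun_eq_iff)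
  show "restr0 A0 x = (\<lambda>a. s * y a)"
    using \<open>s > 0\<close> by (simp add: y_def)
qed

lemma pos_homogeneous_onD:
  "pos_homogeneous_on A g \<Longrightarrow> c \<ge> 0 \<Longrightarrow> x \<in> cube A \<Longrightarrow> (\<lambda>a. c * x a) \<in> cube A \<Longrightarrow>
    g (\<lambda>a. c * x a) = c * g x"
  by (simp add: pos_homogeneous_on_def)

lemma pos_homogeneous_on_zero: "pos_homogeneous_on A g \<Longrightarrow> g (\<lambda>a. 0) = 0"
  using pos_homogeneous_onD[of A g 0 "\<lambda>a. 0"] by (simp add: cube_def)

lemma pos_homogeneous_on_lattice_ops:
  assumes "pos_homogeneous_on A g" "pos_homogeneous_on A h"
  shows "pos_homogeneous_on A (\<lambda>x. g x + h x)" "pos_homogeneous_on A (\<lambda>x. g x - h x)"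
    "pos_homogeneous_on A (\<lambda>x. max (g x) (h x))" "pos_homogeneous_on A (\<lambda>x. min (g x) (h x))"
  using assms
  by (auto simp: pos_homogeneous_on_def algebra_simps max_mult_distrib_left min_mult_distrib_left)

lemma pos_homogeneous_on_cmult: "pos_homogeneous_on A g \<Longrightarrow> pos_homogeneous_on A (\<lambda>x. c * g x)"
  by (simp add: pos_homogeneous_on_def)

lemma pos_homogeneous_on_delta: "pos_homogeneous_on A (delta A a)"
  by (simp add: pos_homogeneous_on_def delta_def on_cube_def)

lemma depends_only_on_lattice_ops:
  assumes "depends_only_on A A0 g" "depends_only_on A A0 h"
  shows "depends_only_on A A0 (\<lambda>x. g x + h x)" "depends_only_on A A0 (\<lambda>x. g x - h x)"
    "depends_only_on A A0 (\<lambda>x. max (g x) (h x))" "depends_only_on A A0 (\<lambda>x. min (g x) (h x))"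
  using assms by (simp_all add: depends_only_on_def)

lemma depends_only_on_cmult: "depends_only_on A A0 g \<Longrightarrow> depends_only_on A A0 (\<lambda>x. c * g x)"
  by (simp add: depends_only_on_def)

lemma depends_only_on_delta: "a \<in> A0 \<Longrightarrow> A0 \<subseteq> A \<Longrightarrow> depends_only_on A A0 (delta A a)"
  by (simp add: depends_only_on_def delta_def on_cube_def restr0_in_cube) (simp add: restr0_def)

lemma continuous_on_delta: "continuous_on (cube A) (delta A a)"
  by (rule continuous_on_eq[OF continuous_on_subset[OF continuous_on_product_coordinates]])
     (auto simp: delta_def on_cube_def)

lemma abs_le_l1_norm_if_bounded_on_l1_sphere:
  assumes A0: "finite A0" "A0 \<subseteq> A"
    and hom: "pos_homogeneous_on A D" and dep: "depends_only_on A A0 D"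
    and bound: "\<And>y. y \<in> l1_sphere A A0 \<Longrightarrow> \<bar>D y\<bar> \<le> e" and x: "x \<in> cube A"
  shows "\<bar>D x\<bar> \<le> e * l1_norm A0 x"
proof -
  have r: "restr0 A0 x \<in> cube A" and Dx: "D x = D (restr0 A0 x)"
    using restr0_in_cube[OF A0(2) x] dep x by (auto simp: depends_only_on_def)
  show ?thesis
  proof (cases "l1_norm A0 x = 0")
    case True
    then have "restr0 A0 x = (\<lambda>a. 0)"
      using A0(1) by (auto simp: l1_norm_def restr0_def fun_eq_iff sum_nonneg_eq_0_iff)
    then have "D x = 0"
      using Dx pos_homogeneous_on_zero[OF hom] by simp
    then show ?thesis
      using True by simp
  next
    case False
    then obtain y where y: "y \<in> l1_sphere A A0" "restr0 A0 x = (\<lambda>a. l1_norm A0 x * y a)"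
      using l1_sphere_normalize[OF A0 x] by blast
    have "D (\<lambda>a. l1_norm A0 x * y a) = l1_norm A0 x * D y"
      by (rule pos_homogeneous_onD[OF hom])
         (use y r l1_sphere_subset_cube in \<open>auto simp: l1_norm_def intro: sum_nonneg\<close>)
    then have "\<bar>D x\<bar> = l1_norm A0 x * \<bar>D y\<bar>"
      using Dx y(2) by (simp add: abs_mult l1_norm_def)
    moreover have "0 \<le> l1_norm A0 x"
      by (simp add: l1_norm_def sum_nonneg)
    ultimately show ?thesis
      using bound[OF y(1)] mult_right_mono[of "\<bar>D y\<bar>" e "l1_norm A0 x"] by (simp add: mult.commute)
  qed
qed

lemma zero_in_fbl_sums: "0 \<in> fbl_sums A G"
  unfolding fbl_sums_def by force

lemma fbl_sums_le_card:
  assumes "A0 \<subseteq> A" "c \<ge> 0" and G: "\<And>x. x \<in> cube A \<Longrightarrow> \<bar>G x\<bar> \<le> c * l1_norm A0 x"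
    and "s \<in> fbl_sums A G"
  shows "s \<le> c * card A0"
proof -
  obtain m :: nat and xs where s: "s = (\<Sum>i<m. \<bar>G (xs i)\<bar>)" and xs: "\<forall>i<m. xs i \<in> cube A"
    and xs1: "\<forall>a\<in>A. (\<Sum>i<m. \<bar>xs i a\<bar>) \<le> 1"
    using assms(4) unfolding fbl_sums_def by blast
  have "s \<le> (\<Sum>i<m. c * l1_norm A0 (xs i))"
    unfolding s using G xs by (intro sum_mono) auto
  also have "\<dots> = c * (\<Sum>a\<in>A0. \<Sum>i<m. \<bar>xs i a\<bar>)"
    by (simp add: l1_norm_def sum_distrib_left sum.swap[of _ A0])
  also have "\<dots> \<le> c * (\<Sum>a\<in>A0. 1)"
    using assms(1,2) xs1 by (intro mult_left_mono sum_mono) auto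
  finally show ?thesis
    by simp
qed

lemma fbl_sums_le_if_bounded_on_l1_sphere:
  assumes A0: "finite A0" "A0 \<subseteq> A"
    and hom: "pos_homogeneous_on A D" and dep: "depends_only_on A A0 D"
    and bound: "\<And>y. y \<in> l1_sphere A A0 \<Longrightarrow> \<bar>D y\<bar> \<le> e" and "e \<ge> 0"
    and G: "\<And>x. x \<in> cube A \<Longrightarrow> G x = D x" and s: "s \<in> fbl_sums A G"
  shows "s \<le> e * card A0"
  using fbl_sums_le_card[OF A0(2) \<open>e \<ge> 0\<close> _ s]
    abs_le_l1_norm_if_bounded_on_l1_sphere[OF A0 hom dep bound] G
  by simp

lemma closed_sublattice_approx:
  assumes S: "closed_sublattice A S" and g: "g \<in> fin_norm_space A"
    and approx: "\<And>e. e > 0 \<Longrightarrow> \<exists>h\<in>S. \<forall>s\<in>fbl_sums A (\<lambda>x. h x - g x). s \<le> e"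
  shows "g \<in> S"
proof -
  have "\<forall>n. \<exists>h\<in>S. \<forall>s\<in>fbl_sums A (\<lambda>x. h x - g x). s \<le> inverse (real (Suc n))"
    using approx by simp
  then obtain F where F: "\<And>n. F n \<in> S"
    and F_le: "\<And>n s. s \<in> fbl_sums A (\<lambda>x. F n x - g x) \<Longrightarrow> s \<le> inverse (real (Suc n))"
    by metis
  have "0 \<le> fbl_norm A (\<lambda>x. F n x - g x)" "fbl_norm A (\<lambda>x. F n x - g x) \<le> inverse (real (Suc n))"
    for n
    using zero_in_fbl_sums[of A "\<lambda>x. F n x - g x"] F_le unfolding fbl_norm_def
    by (auto intro!: cSup_upper cSup_least bdd_aboveI)
  then have "(\<lambda>n. fbl_norm A (\<lambda>x. F n x - g x)) \<longlonglongrightarrow> 0"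
    by (intro tendsto_sandwich[OF _ _ tendsto_const LIMSEQ_inverse_real_of_nat]) auto
  then show ?thesis
    using S F g unfolding closed_sublattice_def by blast
qed

lemma linear_2x2_solvable:
  fixes p q r s :: "'a::field"
  assumes det: "p * s - q * r \<noteq> 0"
  shows "\<exists>c d. c * p + d * q = u \<and> c * r + d * s = v"
proof (intro exI conjI)
  let ?det = "p * s - q * r"
  define c where "c = (u * s - v * q) / ?det"
  define d where "d = (v * p - u * r) / ?det"
  have cd: "c * ?det = u * s - v * q" "d * ?det = v * p - u * r"
    using det by (simp_all add: c_def d_def)
  have "(c * p + d * q) * ?det = (c * ?det) * p + (d * ?det) * q"
    by (simp add: algebra_simps)
  also have "\<dots> = u * ?det"
    unfolding cd by (simp add: algebra_simps)
  finally show "c * p + d * q = u"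
    using det by simp
  have "(c * r + d * s) * ?det = (c * ?det) * r + (d * ?det) * s"
    by (simp add: algebra_simps)
  also have "\<dots> = v * ?det"
    unfolding cd by (simp add: algebra_simps)
  finally show "c * r + d * s = v"
    using det by simp
qed

lemma l1_sphere_outside: "y \<in> l1_sphere A A0 \<Longrightarrow> b \<notin> A0 \<Longrightarrow> y b = 0"
  unfolding l1_sphere_def by (metis (mono_tags, lifting) mem_Collect_eq restr0_def)

lemma l1_sphere_proportional:
  assumes x: "x \<in> l1_sphere A A0" and y: "y \<in> l1_sphere A A0"
    and minors: "\<And>a b. a \<in> A0 \<Longrightarrow> b \<in> A0 \<Longrightarrow> x a * y b = x b * y a"
    and a: "a \<in> A0" "x a \<noteq> 0"
  shows "y = x \<or> y = (\<lambda>b. - x b)"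
proof -
  define t where "t = y a / x a"
  have y_eq: "y = (\<lambda>b. t * x b)"
  proof
    fix b
    show "y b = t * x b"
    proof (cases "b \<in> A0")
      case True
      then show ?thesis
        using minors[OF a(1) True] a(2) by (simp add: t_def field_simps)
    next
      case False
      then show ?thesis
        using x y by (simp add: l1_sphere_outside)
    qed
  qed
  have "l1_norm A0 y = \<bar>t\<bar> * l1_norm A0 x"
    by (simp add: y_eq l1_norm_def abs_mult sum_distrib_left)
  then have "\<bar>t\<bar> = 1"
    using x y by (simp add: l1_sphere_def)
  then show ?thesis
    by (auto simp: y_eq abs_if split: if_splits)
qed

lemma l1_sphere_two_point_interpolation:
  fixes f :: "('a \<Rightarrow> real) \<Rightarrow> real"
  assumes delta: "\<And>a. a \<in> A0 \<Longrightarrow> delta A a \<in> L"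
    and add: "\<And>g h. g \<in> L \<Longrightarrow> h \<in> L \<Longrightarrow> (\<lambda>z. g z + h z) \<in> L"
    and cmult: "\<And>c g. g \<in> L \<Longrightarrow> (\<lambda>z. c * g z) \<in> L"
    and max: "\<And>g h. g \<in> L \<Longrightarrow> h \<in> L \<Longrightarrow> (\<lambda>z. max (g z) (h z)) \<in> L"
    and x: "x \<in> l1_sphere A A0" and y: "y \<in> l1_sphere A A0"
  shows "\<exists>h\<in>L. h x = f x \<and> h y = f y"
proof -
  have delta_eval: "delta A a z = z a" if "z \<in> l1_sphere A A0" for a z
    using that l1_sphere_subset_cube by (auto simp: delta_def on_cube_def)
  show ?thesis
  proof (cases "\<exists>a\<in>A0. \<exists>b\<in>A0. x a * y b - x b * y a \<noteq> 0")
    case True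
    then obtain a b where ab: "a \<in> A0" "b \<in> A0" and "x a * y b - x b * y a \<noteq> 0"
      by blast
    then obtain c d where "c * x a + d * x b = f x" "c * y a + d * y b = f y"
      using linear_2x2_solvable by blast
    moreover have "(\<lambda>z. c * delta A a z + d * delta A b z) \<in> L"
      using ab by (intro add cmult delta)
    ultimately show ?thesis
      using delta_eval x y by (intro bexI) auto
  next
    case False
    have "l1_norm A0 x = 1"
      using x by (simp add: l1_sphere_def)
    then obtain a where a: "a \<in> A0" "x a \<noteq> 0"
      unfolding l1_norm_def by (metis abs_zero sum.neutral zero_neq_one)
    define p where "p = (\<lambda>z. inverse (x a) * delta A a z)"
    have "p \<in> L"
      unfolding p_def by (rule cmult[OF delta[OF a(1)]])
    moreover have "p x = 1"
      using a(2) delta_eval[OF x] by (simp add: p_def)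
    ultimately have p: "p \<in> L" "p x = 1" .
    have "(\<lambda>z. 0 * p z) \<in> L"
      using p(1) by (rule cmult)
    then have "(\<lambda>z. f x * max (p z) 0 + f y * max (- 1 * p z) 0) \<in> L"
      using p(1) by (intro add cmult max) simp_all
    moreover have "y = x \<or> y = (\<lambda>b. - x b)"
      using l1_sphere_proportional[OF x y _ a] False by auto
    then have "y = x \<or> p y = - 1"
      using p(2) delta_eval[OF x] delta_eval[OF y] by (auto simp: p_def)
    ultimately show ?thesis
      using p(2) by (intro bexI) auto
  qed
qed

text \<open>Continuity is imposed because S may contain discontinuous functions.\<close>
definition homogeneous_part :: "'a set \<Rightarrow> 'a set \<Rightarrow> (('a \<Rightarrow> real) \<Rightarrow> real) set \<Rightarrow>
    (('a \<Rightarrow> real) \<Rightarrow> real) set" where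
  "homogeneous_part A A0 S =
     {g \<in> S. pos_homogeneous_on A g \<and> depends_only_on A A0 g \<and> continuous_on (cube A) g}"

lemma homogeneous_part_zero: "closed_sublattice A S \<Longrightarrow> (\<lambda>z. 0) \<in> homogeneous_part A A0 S"
  by (simp add: homogeneous_part_def closed_sublattice_def pos_homogeneous_on_def
      depends_only_on_def)

lemma homogeneous_part_closed:
  assumes S: "closed_sublattice A S"
  shows "\<And>a. a \<in> A0 \<Longrightarrow> A0 \<subseteq> A \<Longrightarrow> delta A a \<in> S \<Longrightarrow> delta A a \<in> homogeneous_part A A0 S"
    and "\<And>c g. g \<in> homogeneous_part A A0 S \<Longrightarrow> (\<lambda>z. c * g z) \<in> homogeneous_part A A0 S"
    and "\<And>g h. g \<in> homogeneous_part A A0 S \<Longrightarrow> h \<in> homogeneous_part A A0 S \<Longrightarrow>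
           (\<lambda>z. g z + h z) \<in> homogeneous_part A A0 S"
    and "\<And>g h. g \<in> homogeneous_part A A0 S \<Longrightarrow> h \<in> homogeneous_part A A0 S \<Longrightarrow>
           (\<lambda>z. max (g z) (h z)) \<in> homogeneous_part A A0 S"
    and "\<And>g h. g \<in> homogeneous_part A A0 S \<Longrightarrow> h \<in> homogeneous_part A A0 S \<Longrightarrow>
           (\<lambda>z. min (g z) (h z)) \<in> homogeneous_part A A0 S"
  using S unfolding homogeneous_part_def closed_sublattice_def
  by (simp_all add: pos_homogeneous_on_delta depends_only_on_delta continuous_on_delta
      pos_homogeneous_on_cmult depends_only_on_cmult pos_homogeneous_on_lattice_ops
      depends_only_on_lattice_ops continuous_on_mult_left continuous_on_add continuous_on_max
      continuous_on_min)

lemma homogeneous_part_approx: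
  assumes S: "closed_sublattice A S" and delta: "\<And>a. a \<in> A0 \<Longrightarrow> delta A a \<in> S"
    and "A0 \<subseteq> A" and cont: "continuous_on (cube A) f" and "e > 0"
  shows "\<exists>h\<in>homogeneous_part A A0 S. \<forall>z\<in>l1_sphere A A0. \<bar>h z - f z\<bar> < e"
proof (rule lattice_Stone_Weierstrass[OF compact_l1_sphere])
  show "continuous_on (l1_sphere A A0) f"
    using cont l1_sphere_subset_cube by (rule continuous_on_subset)
  show "continuous_on (l1_sphere A A0) h" if "h \<in> homogeneous_part A A0 S" for h
    using that l1_sphere_subset_cube unfolding homogeneous_part_def
    by (blast intro: continuous_on_subset)
  show "\<exists>h\<in>homogeneous_part A A0 S. h x = f x \<and> h y = f y"
    if "x \<in> l1_sphere A A0" "y \<in> l1_sphere A A0" for x y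
    using homogeneous_part_closed[OF S] delta \<open>A0 \<subseteq> A\<close> that
    by (intro l1_sphere_two_point_interpolation) auto
  show "homogeneous_part A A0 S \<noteq> {}"
    using homogeneous_part_zero[OF S] by blast
qed (use homogeneous_part_closed[OF S] \<open>e > 0\<close> in auto)

lemma on_cube_mem_fin_norm_space:
  assumes A0: "finite A0" "A0 \<subseteq> A" and cont: "continuous_on (cube A) f"
    and hom: "pos_homogeneous_on A f" and dep: "depends_only_on A A0 f"
  shows "on_cube A f \<in> fin_norm_space A"
proof -
  have "bounded (f ` l1_sphere A A0)"
    using compact_l1_sphere continuous_on_subset[OF cont l1_sphere_subset_cube]
    by (intro compact_imp_bounded compact_continuous_image)
  then obtain M where M: "\<And>y. y \<in> l1_sphere A A0 \<Longrightarrow> \<bar>f y\<bar> \<le> M"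
    by (auto simp: bounded_iff)
  have "s \<le> max M 0 * card A0" if "s \<in> fbl_sums A (on_cube A f)" for s
    by (rule fbl_sums_le_if_bounded_on_l1_sphere[OF A0 hom dep _ _ _ that])
       (use M in \<open>auto simp: on_cube_def intro: max.coboundedI1\<close>)
  then have "bdd_above (fbl_sums A (on_cube A f))"
    by (rule bdd_aboveI)
  then show ?thesis
    by (simp add: fin_norm_space_def on_cube_def)
qed

lemma pos_homogeneous_mem_closed_sublattice:
  assumes S: "closed_sublattice A S" and delta: "\<And>a. a \<in> A0 \<Longrightarrow> delta A a \<in> S"
    and A0: "finite A0" "A0 \<subseteq> A" and cont: "continuous_on (cube A) f"
    and hom: "pos_homogeneous_on A f" and dep: "depends_only_on A A0 f"
  shows "on_cube A f \<in> S"
  using S on_cube_mem_fin_norm_space[OF A0 cont hom dep]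
proof (rule closed_sublattice_approx)
  fix e :: real
  assume "e > 0"
  define e' where "e' = e / (1 + card A0)"
  have "e' > 0" "e' * card A0 \<le> e"
    using \<open>e > 0\<close> by (simp_all add: e'_def field_simps)
  then obtain h where h: "h \<in> homogeneous_part A A0 S" "\<forall>z\<in>l1_sphere A A0. \<bar>h z - f z\<bar> < e'"
    using homogeneous_part_approx[OF S delta A0(2) cont] by blast
  then have "pos_homogeneous_on A (\<lambda>z. h z - f z)" "depends_only_on A A0 (\<lambda>z. h z - f z)"
    using pos_homogeneous_on_lattice_ops(2)[OF _ hom] depends_only_on_lattice_ops(2)[OF _ dep]
    by (simp_all add: homogeneous_part_def)
  then have "s \<le> e' * card A0" if "s \<in> fbl_sums A (\<lambda>z. h z - on_cube A f z)" for s
    by (rule fbl_sums_le_if_bounded_on_l1_sphere[OF A0 _ _ _ _ _ that])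
       (use h(2) \<open>e' > 0\<close> in \<open>auto simp: on_cube_def less_imp_le\<close>)
  then show "\<exists>h\<in>S. \<forall>s\<in>fbl_sums A (\<lambda>z. h z - on_cube A f z). s \<le> e"
    using h(1) \<open>e' * card A0 \<le> e\<close> unfolding homogeneous_part_def by force
qed

theorem mainTheorem6:
  fixes A :: "'a set" and f :: "('a \<Rightarrow> real) \<Rightarrow> real"
  assumes cont: "continuous_on (cube A) f"
    and homog: "\<And>c x. c \<ge> 0 \<Longrightarrow> x \<in> cube A \<Longrightarrow> (\<lambda>a. c * x a) \<in> cube A \<Longrightarrow>
                  f (\<lambda>a. c * x a) = c * f x"
    and fin: "\<exists>A0 ft. finite A0 \<and> A0 \<subseteq> A \<and>
                (\<forall>x\<in>cube A. f x = ft (\<lambda>a. if a \<in> A0 then x a else 0))"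
  shows "on_cube A f \<in> FBL A"
proof -
  obtain A0 ft where A0: "finite A0" "A0 \<subseteq> A"
    and ft: "\<And>x. x \<in> cube A \<Longrightarrow> f x = ft (restr0 A0 x)"
    using fin unfolding restr0_def by blast
  have "depends_only_on A A0 f"
    using ft restr0_in_cube[OF A0(2)] by (simp add: depends_only_on_def)
  moreover have "pos_homogeneous_on A f"
    using homog by (simp add: pos_homogeneous_on_def)
  ultimately show ?thesis
    unfolding FBL_def using pos_homogeneous_mem_closed_sublattice[OF _ _ A0 cont] A0(2)
    by blast
qed

end
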